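(* Let $m\ge0$ and let $\phi_1,\dots,\phi_m$ be anticommuting variables. Let $\mathcal E:\mathscr R\to\mathbb Q(\alpha)[X,Y][\phi_1,\dots,\phi_m]$ be the algebra homomorphism determined by $$\mathcal E(p_n)=X\ (n\ge1),\qquad \mathcal E(\tilde p_n)=\sum_{i=1}^m\phi_i\,h_Y(n+i-m)\ (n\ge0),$$ where $h_Y(r)=\binom{Y+r-1}{r}$ for $r>0$, $h_Y(0)=1$ and $h_Y(r)=0$ for $r<0$. Then for every $f\in\mathscr R$ homogeneous of fermionic degree $m$ and every integer $N\ge m$, $$\mathcal E(f)\big|_{X=N,\,Y=m}=\phi_1\cdots\phi_m\,E_{N,m}(f).$$
   Context: Superfunctions: $x_i$ commuting, $\theta_i$ anticommuting ($\theta_i\theta_j=-\theta_j\theta_i$, $\theta_i^2=0$, commuting with the $x_j$); coefficients in $\mathbb Q(\alpha)$. For a superpartition $\Lambda=(\Lambda_1,\dots,\Lambda_m;\Lambda_{m+1},\dots,\Lambda_\ell)$ ($\Lambda_1>\dots>\Lambda_m\ge0$, $\Lambda_{m+1}\ge\dots\ge\Lambda_\ell>0$), the monomial $m_\Lambda(x_1,\dots,x_N;\theta_1,\dots,\theta_N)=\frac{1}{n_\Lambda!}\sum_{\sigma\in S_N}\theta_{\sigma(1)}\cdots\theta_{\sigma(m)}x_{\sigma(1)}^{\Lambda_1}\cdots x_{\sigma(N)}^{\Lambda_N}$ (with $\Lambda_i=0$ for $i>\ell$, $n_\Lambda!=\prod_{i\ge1}n_{\Lambda^s}(i)!$, $n_{\Lambda^s}(i)$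 the number of parts of $(\Lambda_{m+1},\dots,\Lambda_\ell)$ equal to $i$). $\mathscr R$ is the (super)algebra spanned by the inverse limits of these monomials; for $f\in\mathscr R$, $f(x_1,\dots,x_N;\theta_1,\dots,\theta_N)$ denotes the restriction to $N$ variables. Power sums $p_n=\sum_ix_i^n$ ($n\ge1$), $\tilde p_n=\sum_i\theta_ix_i^n$ ($n\ge0$); the products $p_\Lambda=\tilde p_{\Lambda_1}\cdots\tilde p_{\Lambda_m}p_{\Lambda_{m+1}}\cdots p_{\Lambda_\ell}$ form a basis of $\mathscr R$; the $\tilde p_n$ are odd and the $p_n$ even, and $\mathcal E$ respects this grading. Evaluation: for $F$ symmetric in $x_1,\dots,x_N,\theta_1,\dots,\theta_N$ (simultaneous permutations), homogeneous of degree $m\le N$ in $\theta$, write $F=\sum_{i_1<\dots<i_m}\theta_{i_1}\cdots\theta_{i_m}f_{i_1\dots i_m}(x)$ and set $E_{N,m}(F)=\bigl[f_{1\dots m}(x)/\prod_{1\le i<j\le m}(x_i-x_j)\bigr]_{x_1=\dots=x_N=1}$; for $f\in\mathscr R$, $E_{N,m}(f)=E_{N,m}(f(x_1,\dots,x_N;\theta_1,\dots,\theta_N))$. *)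

theory Defs
  imports Main "HOL-Library.Poly_Mapping"
begin

type_synonym 'k mpoly = "(nat \<Rightarrow>\<^sub>0 nat) \<Rightarrow>\<^sub>0 'k"

definition mvar :: "nat \<Rightarrow> 'k::comm_ring_1 mpoly" where
  "mvar i = Poly_Mapping.single (Poly_Mapping.single i 1) 1"

definition mconst :: "'k::comm_ring_1 \<Rightarrow> 'k mpoly" where
  "mconst c = Poly_Mapping.single 0 c"

definition meval :: "(nat \<Rightarrow> 'k::comm_ring_1) \<Rightarrow> 'k mpoly \<Rightarrow> 'k" where
  "meval a p = (\<Sum>\<mu>\<in>Poly_Mapping.keys p. Poly_Mapping.lookup p \<mu> * (\<Prod>i\<in>Poly_Mapping.keys \<mu>. a i ^ Poly_Mapping.lookup \<mu> i))"

text \<open>An element of the Grassmann algebra over 'r with anticommuting generators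
  t_0, t_1, ... is represented by its coefficient function: G S is the
  coefficient of the ordered product t_{s1} t_{s2} ... t_{sk} (s1 < ... < sk)
  where S = {s1,...,sk}.  Only finite S are relevant.\<close>

type_synonym 'r grass = "nat set \<Rightarrow> 'r"

definition gsign :: "nat set \<Rightarrow> nat set \<Rightarrow> 'r::comm_ring_1" where
  "gsign A B = (-1) ^ card {(a, b). a \<in> A \<and> b \<in> B \<and> b < a}"

definition gmul :: "'r::comm_ring_1 grass \<Rightarrow> 'r grass \<Rightarrow> 'r grass" where
  "gmul F G = (\<lambda>S. \<Sum>A\<in>Pow S. gsign A (S - A) * F A * G (S - A))"

definition gone :: "'r::comm_ring_1 grass" where
  "gone = (\<lambda>S. if S = {} then 1 else 0)"

definition gscal :: "'r::comm_ring_1 \<Rightarrow> 'r grass" where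
  "gscal c = (\<lambda>S. if S = {} then c else 0)"

definition ggen :: "nat \<Rightarrow> 'r::comm_ring_1 grass" where
  "ggen i = (\<lambda>S. if S = {i} then 1 else 0)"

definition gprod_list :: "'r::comm_ring_1 grass list \<Rightarrow> 'r grass" where
  "gprod_list xs = foldr gmul xs gone"

definition gmap :: "('r \<Rightarrow> 's) \<Rightarrow> 'r grass \<Rightarrow> 's grass" where
  "gmap h F = (\<lambda>S. h (F S))"

text \<open>A superpartition (Lambda_1,...,Lambda_m; Lambda_{m+1},...,Lambda_l) is a pair
  (a, b) of lists: a = fermionic parts (strictly decreasing, entries >= 0),
  b = bosonic parts (weakly decreasing, entries > 0).\<close>

definition superpartition :: "nat list \<times> nat list \<Rightarrow> bool" where
  "superpartition L \<longleftrightarrow> sorted_wrt (>) (fst L) \<and> sorted_wrt (\<ge>) (snd L) \<and> (\<forall>k\<in>set (snd L). k > 0)"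

definition ferm_deg :: "nat list \<times> nat list \<Rightarrow> nat" where
  "ferm_deg L = length (fst L)"

text \<open>Restriction to N variables x_0..x_{N-1}, theta_0..theta_{N-1}:
  superpolynomials are Grassmann elements (generators theta_i) with
  coefficients in the polynomial ring in x_0,x_1,...\<close>

definition pN :: "nat \<Rightarrow> nat \<Rightarrow> 'k::comm_ring_1 mpoly grass" where
  "pN N n = gscal (\<Sum>i<N. mvar i ^ n)"

definition ptN :: "nat \<Rightarrow> nat \<Rightarrow> 'k::comm_ring_1 mpoly grass" where
  "ptN N n = (\<lambda>S. \<Sum>i<N. (ggen i :: 'k mpoly grass) S * mvar i ^ n)"

definition pLN :: "nat \<Rightarrow> nat list \<times> nat list \<Rightarrow> 'k::comm_ring_1 mpoly grass" where
  "pLN N L = gprod_list (map (ptN N) (fst L) @ map (pN N) (snd L))"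

definition superfun_restr ::
  "(nat list \<times> nat list) set \<Rightarrow> (nat list \<times> nat list \<Rightarrow> 'k::comm_ring_1) \<Rightarrow> nat \<Rightarrow> 'k mpoly grass" where
  "superfun_restr Supp c N = (\<lambda>S. \<Sum>L\<in>Supp. mconst (c L) * pLN N L S)"

definition vandermonde :: "nat \<Rightarrow> 'k::comm_ring_1 mpoly" where
  "vandermonde m = (\<Prod>(i, j)\<in>{(i, j). i < j \<and> j < m}. mvar i - mvar j)"

text \<open>F = sum theta_{i1}...theta_{im} f_{i1...im}(x); with 0-based indices
  f_{1..m} is F {0..<m}; divide by the Vandermonde in x_0..x_{m-1} and set all x = 1.\<close>
definition E_eval :: "nat \<Rightarrow> nat \<Rightarrow> 'k::comm_ring_1 mpoly grass \<Rightarrow> 'k" where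
  "E_eval N m F = (THE e. \<exists>g. F {0..<m} = vandermonde m * g \<and> e = meval (\<lambda>_. 1) g)"

text \<open>X = variable 0, Y = variable 1 of the polynomial ring; phi_i = generator i-1.\<close>

definition hY :: "int \<Rightarrow> 'k::field_char_0 mpoly" where
  "hY r = (if r < 0 then 0
           else mconst (1 / fact (nat r)) * (\<Prod>j<nat r. mvar 1 + of_nat j))"

definition calE_p :: "nat \<Rightarrow> nat \<Rightarrow> 'k::field_char_0 mpoly grass" where
  "calE_p m n = gscal (mvar 0)"

definition calE_pt :: "nat \<Rightarrow> nat \<Rightarrow> 'k::field_char_0 mpoly grass" where
  "calE_pt m n = (\<lambda>S. \<Sum>i<m. (ggen i :: 'k mpoly grass) S * hY (int n + int (i + 1) - int m))"

definition calE_pL :: "nat \<Rightarrow> nat list \<times> nat list \<Rightarrow> 'k::field_char_0 mpoly grass" where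
  "calE_pL m L = gprod_list (map (calE_pt m) (fst L) @ map (calE_p m) (snd L))"

definition calE ::
  "nat \<Rightarrow> (nat list \<times> nat list) set \<Rightarrow> (nat list \<times> nat list \<Rightarrow> 'k::field_char_0) \<Rightarrow> 'k mpoly grass" where
  "calE m Supp c = (\<lambda>S. \<Sum>L\<in>Supp. mconst (c L) * calE_pL m L S)"

end

theory Submission
  imports Defs "Jordan_Normal_Form.Determinant"
begin

(* Both sides of the identity are Grassmann elements supported only on the
   top monomial phi_1...phi_m, i.e. on the index set {0..<m}, so it suffices to compare
   the coefficients there; by linearity it suffices to treat one power sum p_Lambda with
   fermionic part a = (a_1,...,a_m) and l bosonic parts.

   (1) A product of m degree-one Grassmann elements v_1...v_m has, at the index set
       {0..<m}, the coefficient det (v_r {c}).  Hence the top coefficient of p_Lambda in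
       N variables is det (x_c^(a_r)) * (p_(b_1)...p_(b_l)), and that of E(p_Lambda) is
       det (h_Y(a_r + c + 1 - m)) * X^l.
   (2) Newton interpolation of y^n at the nodes x_0..x_(m-1), whose coefficients are
       complete homogeneous polynomials, factors det (x_c^(a_r)) as the Vandermonde
       determinant times det H, where H evaluated at x = 1 is the binomial matrix
       (a_r choose m-1-p).  Multiplying by the unitriangular Pascal matrix gives
       det ((a_r + c) choose (m-1)), which is exactly det (h_m(a_r + c + 1 - m)).
   (3) Consequently E_{N,m}(p_Lambda) = det ((a_r + c) choose (m-1)) * N^l, which is also the
       top coefficient of E(p_Lambda) at X = N, Y = m. *)

section \<open>Evaluation of multivariate polynomials\<close>

definition mon :: "(nat \<Rightarrow> 'k::comm_ring_1) \<Rightarrow> (nat \<Rightarrow>\<^sub>0 nat) \<Rightarrow> 'k" where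
  "mon a \<mu> = (\<Prod>i\<in>Poly_Mapping.keys \<mu>. a i ^ Poly_Mapping.lookup \<mu> i)"

lemma mon_superset:
  assumes "finite K" "Poly_Mapping.keys \<mu> \<subseteq> K"
  shows "mon a \<mu> = (\<Prod>i\<in>K. a i ^ Poly_Mapping.lookup \<mu> i)"
  unfolding mon_def
  by (rule prod.mono_neutral_left) (use assms in \<open>auto simp: in_keys_iff\<close>)

lemma mon_add: "mon a (\<mu> + \<nu>) = mon a \<mu> * mon a \<nu>"
proof -
  let ?K = "Poly_Mapping.keys \<mu> \<union> Poly_Mapping.keys \<nu>"
  have "Poly_Mapping.keys (\<mu> + \<nu>) \<subseteq> ?K"
    by (simp add: Poly_Mapping.keys_add)
  then show ?thesis
    by (simp add: mon_superset[of ?K] lookup_add power_add prod.distrib)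
qed

lemma mon_zero [simp]: "mon a 0 = 1"
  by (simp add: mon_def)

lemma meval_superset:
  assumes "finite K" "Poly_Mapping.keys p \<subseteq> K"
  shows "meval a p = (\<Sum>\<mu>\<in>K. Poly_Mapping.lookup p \<mu> * mon a \<mu>)"
  unfolding meval_def mon_def[symmetric]
  by (rule sum.mono_neutral_left) (use assms in \<open>auto simp: in_keys_iff\<close>)

lemma meval_add: "meval a (p + q) = meval a p + meval a q"
proof -
  let ?K = "Poly_Mapping.keys p \<union> Poly_Mapping.keys q"
  have "Poly_Mapping.keys (p + q) \<subseteq> ?K"
    by (simp add: Poly_Mapping.keys_add)
  then show ?thesis
    by (simp add: meval_superset[of ?K] lookup_add sum.distrib algebra_simps)
qed

lemma meval_single: "meval a (Poly_Mapping.single \<mu> c) = c * mon a \<mu>"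
  by (subst meval_superset[of "{\<mu>}"]) auto

lemma meval_zero: "meval a 0 = 0"
  by (simp add: meval_def)

lemma meval_sum: "meval a (sum f A) = (\<Sum>x\<in>A. meval a (f x))"
  by (induction A rule: infinite_finite_induct) (auto simp: meval_add meval_zero)

lemma poly_mapping_expand:
  "p = (\<Sum>\<mu>\<in>Poly_Mapping.keys p. Poly_Mapping.single \<mu> (Poly_Mapping.lookup p \<mu>))"
proof (rule poly_mapping_eqI)
  fix k
  show "Poly_Mapping.lookup p k
      = Poly_Mapping.lookup (\<Sum>\<mu>\<in>Poly_Mapping.keys p. Poly_Mapping.single \<mu> (Poly_Mapping.lookup p \<mu>)) k"
    by (cases "k \<in> Poly_Mapping.keys p") (auto simp: lookup_sum lookup_single when_def in_keys_iff)
qed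

lemma meval_mult: "meval a (p * q) = meval a p * meval a (q :: 'k::comm_ring_1 mpoly)"
proof -
  have "p * q = (\<Sum>\<mu>\<in>Poly_Mapping.keys p. Poly_Mapping.single \<mu> (Poly_Mapping.lookup p \<mu>)) *
                (\<Sum>\<nu>\<in>Poly_Mapping.keys q. Poly_Mapping.single \<nu> (Poly_Mapping.lookup q \<nu>))"
    by (metis poly_mapping_expand)
  also have "\<dots> = (\<Sum>\<mu>\<in>Poly_Mapping.keys p. \<Sum>\<nu>\<in>Poly_Mapping.keys q.
        Poly_Mapping.single (\<mu> + \<nu>) (Poly_Mapping.lookup p \<mu> * Poly_Mapping.lookup q \<nu>))"
    by (simp add: sum_distrib_left sum_distrib_right mult_single) (rule sum.swap)
  finally have "meval a (p * q) = (\<Sum>\<mu>\<in>Poly_Mapping.keys p. \<Sum>\<nu>\<in>Poly_Mapping.keys q.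
        (Poly_Mapping.lookup p \<mu> * mon a \<mu>) * (Poly_Mapping.lookup q \<nu> * mon a \<nu>))"
    by (simp add: meval_sum meval_single mon_add mult_ac)
  also have "\<dots> = meval a p * meval a q"
    by (simp add: meval_def mon_def sum_product)
  finally show ?thesis .
qed

lemma meval_one: "meval a 1 = (1::'k::comm_ring_1)"
  using meval_single[of a 0 1] by (simp add: one_poly_mapping.abs_eq single.abs_eq)

interpretation meval_hom: comm_ring_hom "meval a"
  by unfold_locales (auto simp: meval_add meval_mult meval_one meval_zero)

lemma meval_mvar [simp]: "meval a (mvar i) = a i"
  unfolding mvar_def meval_single mon_def by simp

lemma meval_mconst [simp]: "meval a (mconst c) = c"
  unfolding mconst_def meval_single by simp

section \<open>Products of degree-one Grassmann elements\<close>

definition deg1 :: "'r::comm_ring_1 grass \<Rightarrow> bool" where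
  "deg1 v \<longleftrightarrow> (\<forall>S. (\<forall>i. S \<noteq> {i}) \<longrightarrow> v S = 0)"

lemma gmul_infinite: "infinite S \<Longrightarrow> gmul F G S = 0"
  by (simp add: gmul_def)

lemma gsign_single: "gsign {s} B = (-1) ^ card {b\<in>B. b < s}"
proof -
  have "{(a, b). a \<in> {s} \<and> b \<in> B \<and> b < a} = Pair s ` {b\<in>B. b < s}" by auto
  then have "card {(a, b). a \<in> {s} \<and> b \<in> B \<and> b < a} = card {b\<in>B. b < s}"
    by (simp add: card_image inj_on_def)
  then show ?thesis by (simp add: gsign_def)
qed

lemma gmul_deg1:
  assumes "deg1 v" "finite S"
  shows "gmul v W S = (\<Sum>s\<in>S. gsign {s} (S - {s}) * v {s} * W (S - {s}))"
proof -
  have "gmul v W S = (\<Sum>A\<in>(\<lambda>s. {s}) ` S. gsign A (S - A) * v A * W (S - A))"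
    unfolding gmul_def
  proof (rule sum.mono_neutral_right)
    show "\<forall>A\<in>Pow S - (\<lambda>s. {s}) ` S. gsign A (S - A) * v A * W (S - A) = 0"
    proof
      fix A assume "A \<in> Pow S - (\<lambda>s. {s}) ` S"
      then have "v A = 0" using assms(1) by (auto simp: deg1_def)
      then show "gsign A (S - A) * v A * W (S - A) = 0" by simp
    qed
  qed (use assms in auto)
  also have "\<dots> = (\<Sum>s\<in>S. gsign {s} (S - {s}) * v {s} * W (S - {s}))"
    by (subst sum.reindex) (auto simp: inj_on_def)
  finally show ?thesis .
qed

lemma gprod_deg1_support:
  assumes "\<forall>v\<in>set xs. deg1 v \<and> (\<forall>i. v {i} \<noteq> 0 \<longrightarrow> i \<in> I)"
    and "foldr gmul xs gone S \<noteq> 0"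
  shows "finite S \<and> card S = length xs \<and> S \<subseteq> I"
  using assms
proof (induction xs arbitrary: S)
  case Nil
  then show ?case by (auto simp: gone_def split: if_splits)
next
  case (Cons v ys)
  have fin: "finite S" using Cons.prems gmul_infinite by fastforce
  have "(\<Sum>s\<in>S. gsign {s} (S - {s}) * v {s} * foldr gmul ys gone (S - {s})) \<noteq> 0"
    using Cons.prems gmul_deg1[of v S "foldr gmul ys gone"] fin by simp
  then obtain s where "s \<in> S" "gsign {s} (S - {s}) * v {s} * foldr gmul ys gone (S - {s}) \<noteq> 0"
    by (meson sum.not_neutral_contains_not_neutral)
  then have s: "s \<in> S" "v {s} \<noteq> 0" "foldr gmul ys gone (S - {s}) \<noteq> 0" by auto
  from Cons.IH[OF _ s(3)] Cons.prems(1) have "card (S - {s}) = length ys" "S - {s} \<subseteq> I" by auto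
  moreover have "card S > 0" using fin s by (auto simp: card_gt_0_iff)
  ultimately show ?case using s Cons.prems(1) fin by (auto simp: card_Diff_singleton)
qed

lemma image_delete_strict_mono:
  assumes "strict_mono f" "j < Suc n"
  shows "f ` {..<Suc n} - {f j} = (f \<circ> insert_index j) ` {..<n}"
proof -
  have "insert_index j ` {0..<n} = {0..<Suc n} - {j}"
    by (rule insert_index_image) (use assms in auto)
  then have "(f \<circ> insert_index j) ` {..<n} = f ` ({..<Suc n} - {j})"
    unfolding image_comp[symmetric] by (simp add: atLeast0LessThan)
  also have "\<dots> = f ` {..<Suc n} - {f j}"
    using image_set_diff[OF strict_mono_imp_inj_on[OF assms(1)]] by simp
  finally show ?thesis by simp
qed

lemma card_below_strict_mono:
  assumes "strict_mono f" "j < Suc n"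
  shows "card {b \<in> f ` {..<Suc n} - {f j}. b < f j} = j"
proof -
  have "{b \<in> f ` {..<Suc n} - {f j}. b < f j} = f ` {..<j}"
    using assms by (auto simp: strict_mono_less strict_mono_eq)
  moreover have "inj f" using assms(1) strict_mono_imp_inj_on by blast
  ultimately show ?thesis by (simp add: card_image inj_on_subset)
qed

text \<open>The coefficient of a product of degree-one elements v_0 ... v_n at the indices
  f 0 < ... < f n is the determinant det (v_r {f c}): expanding the first factor is the
  Laplace expansion along the first row.\<close>
lemma gprod_deg1_det:
  assumes "strict_mono f" "\<forall>v\<in>set xs. deg1 v"
  shows "foldr gmul xs gone (f ` {..<length xs})
       = det (mat (length xs) (length xs) (\<lambda>(r,c). (xs!r) {f c}))"
  using assms
proof (induction xs arbitrary: f)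
  case Nil
  then show ?case by (simp add: gone_def)
next
  case (Cons v ys)
  define n where "n = length ys"
  define S where "S = f ` {..<Suc n}"
  define M where "M = mat (Suc n) (Suc n) (\<lambda>(r,c). ((v#ys)!r) {f c})"
  define g where "g j = f \<circ> insert_index j" for j
  have g_mono: "strict_mono (g j)" for j
  proof -
    have "strict_mono (insert_index j)" by (auto simp: strict_mono_def insert_index_def)
    then show ?thesis
      unfolding g_def using Cons.prems(1) by (simp add: strict_mono_def)
  qed
  have minor: "gsign {f j} (S - {f j}) * v {f j} * foldr gmul ys gone (S - {f j})
             = (-1)^j * v {f j} * det (mat n n (\<lambda>(r,c). (ys!r) {g j c}))" if "j < Suc n" for j
  proof -
    have "gsign {f j} (S - {f j}) = ((-1)^j :: 'a)"
      using card_below_strict_mono[OF Cons.prems(1) that] by (simp add: S_def gsign_single)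
    moreover have "foldr gmul ys gone (S - {f j}) = det (mat n n (\<lambda>(r,c). (ys!r) {g j c}))"
      unfolding S_def image_delete_strict_mono[OF Cons.prems(1) that]
      using Cons.IH[OF g_mono] Cons.prems(2) by (simp add: g_def n_def)
    ultimately show ?thesis by simp
  qed
  have "foldr gmul (v#ys) gone (f ` {..<length (v#ys)})
      = (\<Sum>s\<in>S. gsign {s} (S - {s}) * v {s} * foldr gmul ys gone (S - {s}))"
    using Cons.prems(2) by (simp add: S_def n_def gmul_deg1)
  also have "\<dots> = (\<Sum>j<Suc n. gsign {f j} (S - {f j}) * v {f j} * foldr gmul ys gone (S - {f j}))"
    using Cons.prems(1) strict_mono_imp_inj_on inj_on_subset
    unfolding S_def by (subst sum.reindex) auto
  also have "\<dots> = (\<Sum>j<Suc n. M $$ (0, j) * cofactor M 0 j)"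
  proof (rule sum.cong[OF refl])
    fix j assume j: "j \<in> {..<Suc n}"
    have "mat_delete M 0 j = mat n n (\<lambda>(r,c). (ys!r) {g j c})"
      by (rule eq_matI) (use j in \<open>auto simp: mat_delete_def M_def g_def insert_index_def\<close>)
    then show "gsign {f j} (S - {f j}) * v {f j} * foldr gmul ys gone (S - {f j})
             = M $$ (0, j) * cofactor M 0 j"
      using j minor by (simp add: cofactor_def M_def)
  qed
  also have "\<dots> = det M"
    by (rule laplace_expansion_row[symmetric]) (auto simp: M_def)
  finally show ?case by (simp add: M_def n_def)
qed

lemma gprod_deg1_det_initial:
  assumes "\<forall>v\<in>set xs. deg1 v"
  shows "foldr gmul xs gone {0..<length xs}
       = det (mat (length xs) (length xs) (\<lambda>(r,c). (xs!r) {c}))"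
  using gprod_deg1_det[of id xs] assms by (simp add: strict_mono_def atLeast0LessThan)

lemma gprod_deg1_top:
  assumes "\<forall>v\<in>set xs. deg1 v \<and> (\<forall>i. v {i} \<noteq> 0 \<longrightarrow> i < length xs)"
  shows "foldr gmul xs gone S = (if S = {0..<length xs}
           then det (mat (length xs) (length xs) (\<lambda>(r,c). (xs!r) {c})) else 0)"
proof (cases "S = {0..<length xs}")
  case True
  then show ?thesis using gprod_deg1_det_initial assms by auto
next
  case False
  have "foldr gmul xs gone S = 0"
  proof (rule ccontr)
    assume "foldr gmul xs gone S \<noteq> 0"
    then have "finite S \<and> card S = length xs \<and> S \<subseteq> {0..<length xs}"
      by (intro gprod_deg1_support[of xs "{0..<length xs}"]) (use assms in auto)
    then show False using False by (simp add: card_subset_eq)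
  qed
  then show ?thesis using False by simp
qed

lemma gmul_scal_right: "gmul F (\<lambda>S. G S * c) = (\<lambda>S. gmul F G S * c)"
  by (rule ext) (simp add: gmul_def sum_distrib_right sum_distrib_left mult_ac)

lemma gmul_gscal_gscal: "gmul (gscal x) (gscal y) = gscal (x * y)"
proof
  fix S :: "nat set"
  show "gmul (gscal x) (gscal y) S = gscal (x * y) S"
  proof (cases "S = {}")
    case True
    then show ?thesis by (simp add: gmul_def gscal_def gsign_def)
  next
    case False
    then have "gmul (gscal x) (gscal y) S = 0"
      unfolding gmul_def by (intro sum.neutral) (auto simp: gscal_def)
    then show ?thesis using False by (simp add: gscal_def)
  qed
qed

lemma gmul_gscal_right: "finite S \<Longrightarrow> gmul G (gscal e) S = G S * e"
proof -
  assume fin: "finite S"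
  have "gmul G (gscal e) S = (\<Sum>A\<in>{S}. gsign A (S - A) * G A * gscal e (S - A))"
    unfolding gmul_def by (rule sum.mono_neutral_right) (auto simp: gscal_def fin)
  then show ?thesis by (simp add: gscal_def gsign_def)
qed

lemma gprod_list_append_scalars:
  "gprod_list (xs @ map gscal ys) = (\<lambda>S. foldr gmul xs gone S * prod_list ys)"
proof -
  have scalars: "foldr gmul (map gscal ys) gone = gscal (prod_list ys)"
  proof (induction ys)
    case Nil
    then show ?case by (auto simp: gscal_def gone_def)
  qed (simp add: gmul_gscal_gscal)
  have "foldr gmul xs (gscal c) = (\<lambda>S. foldr gmul xs gone S * c)" for c
    by (induction xs) (auto simp: gscal_def gone_def gmul_scal_right)
  then show ?thesis
    by (simp add: gprod_list_def scalars)
qed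

lemma gprod_ggen_upt: "gprod_list (map ggen [0..<m]) S = (if S = {0..<m} then 1 else (0::'r::comm_ring_1))"
proof -
  define xs where "xs = (map ggen [0..<m] :: 'r grass list)"
  have "mat m m (\<lambda>(r,c). (xs!r) {c}) = (1\<^sub>m m :: 'r mat)"
    by (rule eq_matI) (auto simp: xs_def ggen_def)
  moreover have "foldr gmul xs gone S = (if S = {0..<length xs}
           then det (mat (length xs) (length xs) (\<lambda>(r,c). (xs!r) {c})) else 0)"
    by (rule gprod_deg1_top) (auto simp: xs_def deg1_def ggen_def)
  ultimately show ?thesis by (simp add: gprod_list_def xs_def)
qed

lemma gensum_single: "(\<Sum>i<K. (ggen i {c} :: 'a::comm_ring_1) * f i) = (if c < K then f c else 0)"
proof -
  have "(\<Sum>i<K. (ggen i {c} :: 'a) * f i) = (\<Sum>i<K. if i = c then f i else 0)"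
    by (intro sum.cong) (auto simp: ggen_def)
  also have "\<dots> = (if c < K then f c else 0)" by (simp add: sum.delta)
  finally show ?thesis .
qed

lemma gensum_nonsingle: "(\<forall>i. S \<noteq> {i}) \<Longrightarrow> (\<Sum>i<K. (ggen i S :: 'a::comm_ring_1) * f i) = 0"
  by (simp add: ggen_def)

lemma gmul_top_gscal:
  "gmul (gprod_list (map ggen [0..<m])) (gscal e) S = (if S = {0..<m} then e else (0::'r::comm_ring_1))"
proof (cases "finite S")
  case True
  then show ?thesis by (simp add: gmul_gscal_right gprod_ggen_upt)
next
  case False
  then show ?thesis by (auto simp: gmul_infinite)
qed

section \<open>Complete homogeneous polynomials and the Newton expansion\<close>

text \<open>hsn zs r is the complete homogeneous symmetric polynomial h_r in the entries of zs,
  defined by the recursion h_r(z, zs) = h_r(zs) + z h_(r-1)(z, zs).\<close>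
fun hsn :: "'a::comm_ring_1 list \<Rightarrow> nat \<Rightarrow> 'a" where
  "hsn [] r = (if r = 0 then 1 else 0)"
| "hsn (z#zs) 0 = 1"
| "hsn (z#zs) (Suc r) = hsn zs (Suc r) + z * hsn (z#zs) r"

lemma hsn_0 [simp]: "hsn zs 0 = 1"
  by (cases zs) auto

lemma hsn_single: "hsn [y] r = y ^ r"
  by (induction r) auto

lemma hsn_exchange: "hsn (y#zs) (Suc r) = hsn (z#zs) (Suc r) + (y - z) * hsn (y#z#zs) r"
proof (induction r)
  case 0
  then show ?case by (simp add: algebra_simps)
next
  case (Suc r)
  have "hsn (y#zs) (Suc (Suc r)) = hsn zs (Suc (Suc r)) + y * hsn (y#zs) (Suc r)" by simp
  also have "\<dots> = hsn zs (Suc (Suc r)) + y * (hsn (z#zs) (Suc r) + (y - z) * hsn (y#z#zs) r)"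
    by (simp only: Suc.IH)
  finally have L: "hsn (y#zs) (Suc (Suc r))
      = hsn zs (Suc (Suc r)) + y * (hsn (z#zs) (Suc r) + (y - z) * hsn (y#z#zs) r)" .
  have R: "hsn (z#zs) (Suc (Suc r)) + (y - z) * hsn (y#z#zs) (Suc r) =
     hsn zs (Suc (Suc r)) + z * hsn (z#zs) (Suc r) + (y - z) * (hsn (z#zs) (Suc r) + y * hsn (y#z#zs) r)"
    by (simp only: hsn.simps(3))
  show ?case unfolding L R by (simp del: hsn.simps add: algebra_simps)
qed

definition hs :: "'a::comm_ring_1 list \<Rightarrow> int \<Rightarrow> 'a" where
  "hs zs d = (if d < 0 then 0 else hsn zs (nat d))"

lemma hs_exchange: "hs (y#zs) (d+1) = hs (z#zs) (d+1) + (y - z) * hs (y#z#zs) d"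
proof (cases "d < -1")
  case True then show ?thesis by (simp add: hs_def)
next
  case False
  then consider "d = -1" | "d \<ge> 0" by linarith
  then show ?thesis
  proof cases
    case 1 then show ?thesis by (simp add: hs_def)
  next
    case 2
    then have "nat (d+1) = Suc (nat d)" by simp
    then show ?thesis using 2 hsn_exchange[of y zs "nat d" z] by (simp add: hs_def)
  qed
qed

text \<open>Newton interpolation of y^n at the nodes z_0, ..., z_(k-1): the coefficient of the
  Newton basis polynomial prod_(l>p) (y - z_l) is h_(n-(k-1-p))(z_p, ..., z_(k-1)), and the
  remainder is a multiple of prod_l (y - z_l).\<close>
lemma newton_expansion:
  "y ^ n = (\<Sum>p<length zs. hs (drop p zs) (int n - int (length zs - 1 - p)) *
               prod_list (map (\<lambda>z. y - z) (drop (Suc p) zs)))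
         + hs (y#zs) (int n - int (length zs)) * prod_list (map (\<lambda>z. y - z) zs)"
proof (induction zs)
  case Nil
  then show ?case by (simp add: hs_def hsn_single)
next
  case (Cons z zs)
  define k where "k = length zs"
  define T where "T = (\<Sum>p<k. hs (drop p zs) (int n - int (k - 1 - p)) *
               prod_list (map (\<lambda>z. y - z) (drop (Suc p) zs)))"
  define P where "P = prod_list (map (\<lambda>z. y - z) zs)"
  define B where "B = hs (z#zs) (int n - int k)"
  define C where "C = hs (y#z#zs) (int n - int (Suc k))"
  have "y ^ n = T + hs (y#zs) (int n - int k) * P"
    using Cons by (simp add: T_def P_def k_def)
  also have "hs (y#zs) (int n - int k) = B + (y - z) * C"
    using hs_exchange[of y zs "int n - int (Suc k)" z] by (simp add: B_def C_def)
  finally have y: "y ^ n = T + (B + (y - z) * C) * P" .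
  have sum: "(\<Sum>p<length (z#zs). hs (drop p (z#zs)) (int n - int (length (z#zs) - 1 - p)) *
               prod_list (map (\<lambda>z. y - z) (drop (Suc p) (z#zs)))) = B * P + T"
    by (simp only: length_Cons sum.lessThan_Suc_shift) (simp add: T_def P_def k_def B_def)
  have C: "hs (y#z#zs) (int n - int (length (z#zs))) = C" by (simp add: C_def k_def)
  have P: "prod_list (map (\<lambda>z'. y - z') (z#zs)) = (y - z) * P" by (simp add: P_def)
  show ?case unfolding sum C P y by (simp add: algebra_simps)
qed

lemma hsn_meval: "meval a (hsn zs r) = hsn (map (meval a) zs) r"
  by (induction zs r rule: hsn.induct) (simp_all add: meval_hom.hom_add meval_hom.hom_mult)

text \<open>At z_1 = ... = z_k = 1, h_r counts the monomials of degree r in k variables.\<close>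
lemma hsn_ones: "hsn (replicate k 1) r = (of_nat ((r + k - 1) choose r) :: 'a::comm_ring_1)"
proof (induction "replicate k (1::'a)" r arbitrary: k rule: hsn.induct)
  case (1 r) then show ?case by (cases r) (auto simp: binomial_eq_0)
next
  case (2 z zs) then show ?case by simp
next
  case (3 z zs r)
  then obtain k' where k: "k = Suc k'" "zs = replicate k' 1" "z = 1" by (cases k) auto
  have "hsn (replicate k (1::'a)) (Suc r) = hsn (replicate k' 1) (Suc r) + hsn (replicate (Suc k') 1) r"
    using k by simp
  also have "\<dots> = of_nat ((r + k') choose Suc r) + of_nat ((r + k') choose r)"
    using 3(1)[of k'] 3(2)[of "Suc k'"] k by simp
  also have "\<dots> = of_nat ((Suc r + k - 1) choose Suc r)"
    using k by (simp add: add.commute)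
  finally show ?case .
qed

section \<open>The generalized Vandermonde determinant divided by the Vandermonde determinant\<close>

definition gen_vandermonde_mat :: "nat \<Rightarrow> nat list \<Rightarrow> 'k::comm_ring_1 mpoly mat" where
  "gen_vandermonde_mat m a = mat m m (\<lambda>(r,c). mvar c ^ (a!r))"

text \<open>Coefficients of the Newton expansion of x^(a_r) at the nodes x_0, ..., x_(m-1).\<close>
definition newton_coeff_mat :: "nat \<Rightarrow> nat list \<Rightarrow> 'k::comm_ring_1 mpoly mat" where
  "newton_coeff_mat m a = mat m m (\<lambda>(r,p). hs (map mvar [p..<m]) (int (a!r) - int (m-1-p)))"

text \<open>The Newton basis polynomials prod_(l>p) (x - x_l) evaluated at the nodes x_c;
  this matrix is lower triangular.\<close>
definition newton_basis_mat :: "nat \<Rightarrow> 'k::comm_ring_1 mpoly mat" where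
  "newton_basis_mat m = mat m m (\<lambda>(p,c). \<Prod>l\<in>{Suc p..<m}. mvar c - mvar l)"

text \<open>The value of the quotient at x = 1: the determinant of ((a_r + c) choose (m-1)).\<close>
definition binom_det :: "nat \<Rightarrow> nat list \<Rightarrow> 'k::comm_ring_1" where
  "binom_det m a = det (mat m m (\<lambda>(r,c). of_nat ((a!r + c) choose (m-1))))"

lemma prod_list_map_upt: "prod_list (map f [i..<j]) = prod f {i..<j}"
  by (simp add: prod.distinct_set_conv_list[symmetric])

text \<open>Newton expansion at the node y = x_c, where the remainder term vanishes.\<close>
lemma gen_vandermonde_factor:
  "gen_vandermonde_mat m a = newton_coeff_mat m a * (newton_basis_mat m :: 'k::comm_ring_1 mpoly mat)"
proof (rule eq_matI)
  fix r c
  assume "r < dim_row (newton_coeff_mat m a * (newton_basis_mat m :: 'k mpoly mat))"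
    and "c < dim_col (newton_coeff_mat m a * (newton_basis_mat m :: 'k mpoly mat))"
  then have rm: "r < m" and cm: "c < m" by (auto simp: newton_coeff_mat_def newton_basis_mat_def)
  define zs where "zs = (map mvar [0..<m] :: 'k mpoly list)"
  have dropz: "drop p zs = map mvar [p..<m]" for p by (simp add: zs_def drop_map)
  have "prod_list (map (\<lambda>z. mvar c - z) zs) = (\<Prod>l\<in>{0..<m}. mvar c - mvar l)"
    by (simp add: zs_def prod_list_map_upt[of "\<lambda>l. mvar c - mvar l"] o_def)
  also have "\<dots> = 0" using cm by (intro prod_zero) auto
  finally have remainder: "prod_list (map (\<lambda>z. mvar c - z) zs) = 0" .
  have "(gen_vandermonde_mat m a :: 'k mpoly mat) $$ (r, c) = mvar c ^ (a!r)"
    using rm cm by (simp add: gen_vandermonde_mat_def)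
  also have "\<dots> = (\<Sum>p<m. hs (drop p zs) (int (a!r) - int (m-1-p)) *
               prod_list (map (\<lambda>z. mvar c - z) (drop (Suc p) zs)))"
    using newton_expansion[of "mvar c" "a!r" zs] remainder by (simp add: zs_def)
  also have "\<dots> = (newton_coeff_mat m a * newton_basis_mat m) $$ (r, c)"
    using rm cm
    by (simp add: newton_coeff_mat_def newton_basis_mat_def scalar_prod_def atLeast0LessThan
        dropz prod_list_map_upt o_def)
  finally show "gen_vandermonde_mat m a $$ (r, c)
      = (newton_coeff_mat m a * (newton_basis_mat m :: 'k mpoly mat)) $$ (r, c)" .
qed (auto simp: gen_vandermonde_mat_def newton_coeff_mat_def newton_basis_mat_def)

lemma det_newton_basis_mat: "det (newton_basis_mat m) = (vandermonde m :: 'k::comm_ring_1 mpoly)"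
proof -
  have "det (newton_basis_mat m :: 'k mpoly mat) = prod_list (diag_mat (newton_basis_mat m))"
    by (rule det_lower_triangular[of m]) (auto simp: newton_basis_mat_def intro!: prod_zero)
  also have "\<dots> = (\<Prod>i<m. \<Prod>l\<in>{Suc i..<m}. (mvar i - mvar l :: 'k mpoly))"
    by (simp add: diag_mat_def newton_basis_mat_def prod_list_map_upt atLeast0LessThan)
  also have "\<dots> = (\<Prod>(i,l)\<in>Sigma {..<m} (\<lambda>i. {Suc i..<m}). (mvar i - mvar l :: 'k mpoly))"
    by (rule prod.Sigma) auto
  also have "Sigma {..<m} (\<lambda>i. {Suc i..<m}) = {(i, j). i < j \<and> j < m}" by auto
  finally show ?thesis by (simp add: vandermonde_def)
qed

lemma newton_coeff_mat_at_ones: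
  "map_mat (meval (\<lambda>_. 1)) (newton_coeff_mat m a)
     = mat m m (\<lambda>(r,p). of_nat (a!r choose (m-1-p)) :: 'k::comm_ring_1)"
proof (rule eq_matI)
  fix r p assume "r < dim_row (mat m m (\<lambda>(r,p). of_nat (a!r choose (m-1-p)) :: 'k))"
    and "p < dim_col (mat m m (\<lambda>(r,p). of_nat (a!r choose (m-1-p)) :: 'k))"
  then have rm: "r < m" and pm: "p < m" by auto
  show "map_mat (meval (\<lambda>_. 1)) (newton_coeff_mat m a) $$ (r, p)
      = mat m m (\<lambda>(r,p). of_nat (a!r choose (m-1-p)) :: 'k) $$ (r, p)"
  proof (cases "a!r < m - 1 - p")
    case True
    then show ?thesis using rm pm by (simp add: newton_coeff_mat_def hs_def binomial_eq_0)
  next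
    case False
    have "map (meval (\<lambda>_. 1)) (map mvar [p..<m]) = replicate (m - p) (1::'k)"
      by (simp add: o_def map_replicate_const)
    moreover have "nat (int (a!r) - int (m-1-p)) = a!r - (m-1-p)" using False by simp
    ultimately have "map_mat (meval (\<lambda>_. 1)) (newton_coeff_mat m a) $$ (r, p)
        = hsn (replicate (m-p) (1::'k)) (a!r - (m-1-p))"
      using rm pm False by (simp add: newton_coeff_mat_def hs_def hsn_meval)
    also have "\<dots> = of_nat ((a!r - (m-1-p) + (m-p) - 1) choose (a!r - (m-1-p)))" by (rule hsn_ones)
    also have "a!r - (m-1-p) + (m-p) - 1 = a!r" using False pm by arith
    also have "a!r choose (a!r - (m-1-p)) = a!r choose (m-1-p)"
      using False by (metis binomial_symmetric not_less)
    finally show ?thesis using rm pm by simp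
  qed
qed (auto simp: newton_coeff_mat_def)

lemma binomial_convolution:
  assumes "m > 0"
  shows "(\<Sum>p<m. (a choose (m - 1 - p)) * (c choose p)) = (a + c) choose (m - 1)"
proof -
  have "(\<Sum>p<m. (a choose (m - 1 - p)) * (c choose p)) = (\<Sum>k<m. (a choose k) * (c choose (m - 1 - k)))"
    using sum.nat_diff_reindex[of "\<lambda>k. (a choose k) * (c choose (m - 1 - k))" m] assms
    by (auto intro!: sum.cong simp: Suc_diff_Suc)
  also have "\<dots> = (\<Sum>k\<le>m-1. (a choose k) * (c choose (m - 1 - k)))"
    using assms by (intro sum.cong) auto
  also have "\<dots> = (a + c) choose (m - 1)" by (rule vandermonde)
  finally show ?thesis .
qed

text \<open>Right multiplication by the unitriangular Pascal matrix (c choose p) turns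
  (a_r choose m-1-p) into ((a_r + c) choose m-1) without changing the determinant.\<close>
lemma binom_det_eq:
  "binom_det m a = det (mat m m (\<lambda>(r,p). of_nat (a!r choose (m-1-p))) :: 'k::comm_ring_1 mat)"
proof -
  define B where "B = mat m m (\<lambda>(r,p). of_nat ((a!r) choose (m-1-p)) :: 'k)"
  define C where "C = mat m m (\<lambda>(p,c). of_nat (c choose p) :: 'k)"
  have "det C = prod_list (diag_mat C)"
    by (rule det_upper_triangular) (auto simp: C_def upper_triangular_def binomial_eq_0)
  then have det_C: "det C = 1" by (simp add: diag_mat_def C_def prod_list_map_upt)
  have "mat m m (\<lambda>(r,c). of_nat ((a!r + c) choose (m-1)) :: 'k) = B * C"
  proof (rule eq_matI)
    fix r c assume "r < dim_row (B * C)" and "c < dim_col (B * C)"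
    then have rm: "r < m" and cm: "c < m" by (auto simp: B_def C_def)
    have "(B * C) $$ (r, c) = of_nat (\<Sum>p<m. ((a!r) choose (m-1-p)) * (c choose p))"
      using rm cm by (simp add: B_def C_def scalar_prod_def atLeast0LessThan)
    also have "\<dots> = of_nat ((a!r + c) choose (m-1))" using binomial_convolution[of m "a!r" c] rm by simp
    finally show "mat m m (\<lambda>(r,c). of_nat ((a!r + c) choose (m-1)) :: 'k) $$ (r, c) = (B * C) $$ (r, c)"
      using rm cm by simp
  qed (auto simp: B_def C_def)
  moreover have "det (B * C) = det B * det C" by (rule det_mult[of _ m]) (auto simp: B_def C_def)
  ultimately show ?thesis using det_C by (simp add: binom_det_def B_def)
qed

lemma gen_vandermonde_quotient:
  "det (gen_vandermonde_mat m a) = vandermonde m * det (newton_coeff_mat m a :: 'k::comm_ring_1 mpoly mat)"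
  "meval (\<lambda>_. 1) (det (newton_coeff_mat m a :: 'k mpoly mat)) = binom_det m a"
proof -
  have "det (newton_coeff_mat m a * newton_basis_mat m :: 'k mpoly mat)
      = det (newton_coeff_mat m a) * det (newton_basis_mat m)"
    by (rule det_mult[of _ m]) (auto simp: newton_coeff_mat_def newton_basis_mat_def)
  then show "det (gen_vandermonde_mat m a) = vandermonde m * det (newton_coeff_mat m a :: 'k mpoly mat)"
    by (simp add: gen_vandermonde_factor det_newton_basis_mat mult.commute)
  show "meval (\<lambda>_. 1) (det (newton_coeff_mat m a :: 'k mpoly mat)) = binom_det m a"
    using meval_hom.hom_det[of "\<lambda>_. 1" "newton_coeff_mat m a :: 'k mpoly mat"]
    by (simp add: newton_coeff_mat_at_ones binom_det_eq)
qed

section \<open>The coefficients of both sides at the top monomial\<close>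

text \<open>The Vandermonde determinant is a nonzero polynomial: its factors x_i - x_j separate the point x_k = k.\<close>
lemma vandermonde_nonzero: "vandermonde m \<noteq> (0::'k::field_char_0 mpoly)"
proof -
  have fin: "finite {(i, j). i < j \<and> j < (m::nat)}"
    by (rule finite_subset[of _ "{..<m} \<times> {..<m}"]) auto
  have "mvar i - mvar j \<noteq> (0::'k mpoly)" if "i < j" for i j :: nat
  proof
    assume "mvar i - mvar j = (0::'k mpoly)"
    then have "meval of_nat (mvar i - mvar j :: 'k mpoly) = 0" by simp
    then have "(of_nat i :: 'k) = of_nat j" by (simp add: meval_hom.hom_minus)
    then show False using that by simp
  qed
  then show ?thesis unfolding vandermonde_def using fin by (auto simp: prod_zero_iff)
qed

text \<open>Since the Vandermonde determinant is not a zero divisor, E_{N,m} is computed from any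
  factorization of the top coefficient.\<close>
lemma E_eval_eqI:
  assumes "F {0..<m} = vandermonde m * g"
  shows "E_eval N m F = meval (\<lambda>_. 1) (g :: 'k::field_char_0 mpoly)"
  unfolding E_eval_def
proof (rule the_equality)
  show "\<exists>h. F {0..<m} = vandermonde m * h \<and> meval (\<lambda>_. 1) g = meval (\<lambda>_. 1) h"
    using assms by blast
next
  fix e assume "\<exists>h. F {0..<m} = vandermonde m * h \<and> e = meval (\<lambda>_. 1) h"
  then obtain h where "vandermonde m * g = vandermonde m * h" "e = meval (\<lambda>_. 1) h"
    using assms by auto
  then show "e = meval (\<lambda>_. 1) g" using vandermonde_nonzero[where 'k='k] by simp
qed

lemma pLN_top:
  assumes "length (fst L) = m" "m \<le> N"
  shows "pLN N L {0..<m}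
       = det (gen_vandermonde_mat m (fst L)) * prod_list (map (\<lambda>n. \<Sum>i<N. mvar i ^ n) (snd L))"
proof -
  define xs where "xs = (map (ptN N) (fst L) :: 'a::comm_ring_1 mpoly grass list)"
  have bosonic: "map (pN N) (snd L) = map gscal (map (\<lambda>n. \<Sum>i<N. mvar i ^ n) (snd L))"
    by (simp add: pN_def[abs_def])
  have "pLN N L {0..<m} = foldr gmul xs gone {0..<m} * prod_list (map (\<lambda>n. \<Sum>i<N. mvar i ^ n) (snd L))"
    unfolding pLN_def bosonic gprod_list_append_scalars xs_def ..
  moreover have "mat m m (\<lambda>(r,c). (xs!r) {c}) = gen_vandermonde_mat m (fst L)"
    by (rule eq_matI) (use assms in \<open>auto simp: xs_def ptN_def gensum_single gen_vandermonde_mat_def\<close>)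
  moreover have "\<forall>v\<in>set xs. deg1 v"
    by (auto simp: xs_def deg1_def ptN_def gensum_nonsingle)
  ultimately show ?thesis
    using gprod_deg1_det_initial[of xs] assms(1) by (simp add: xs_def)
qed

lemma E_eval_superfun_restr:
  fixes c :: "nat list \<times> nat list \<Rightarrow> 'k::field_char_0"
  assumes "\<forall>L\<in>Supp. length (fst L) = m" "m \<le> N"
  shows "E_eval N m (superfun_restr Supp c N)
       = (\<Sum>L\<in>Supp. c L * (binom_det m (fst L) * of_nat N ^ length (snd L)))"
proof -
  define psum where "psum n = (\<Sum>i<N. mvar i ^ n :: 'k mpoly)" for n
  define g where "g = (\<Sum>L\<in>Supp. mconst (c L) * det (newton_coeff_mat m (fst L)) * prod_list (map psum (snd L)))"
  have "superfun_restr Supp c N {0..<m} = (\<Sum>L\<in>Supp. mconst (c L) * pLN N L {0..<m})"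
    by (simp add: superfun_restr_def)
  also have "\<dots> = vandermonde m * g"
    unfolding g_def sum_distrib_left
    by (intro sum.cong refl)
      (use assms in \<open>simp add: pLN_top gen_vandermonde_quotient psum_def[abs_def] mult_ac\<close>)
  finally have "E_eval N m (superfun_restr Supp c N) = meval (\<lambda>_. 1) g"
    by (rule E_eval_eqI)
  also have "\<dots> = (\<Sum>L\<in>Supp. c L * (binom_det m (fst L) * of_nat N ^ length (snd L)))"
    by (simp add: g_def psum_def meval_hom.hom_sum meval_hom.hom_mult meval_hom.hom_prod_list
        meval_hom.hom_power gen_vandermonde_quotient o_def map_replicate_const prod_list_replicate mult_ac)
  finally show ?thesis .
qed

lemma hY_eval:
  fixes x c m :: nat
  assumes "a 1 = of_nat m" "c < m"
  shows "meval a (hY (int x + int (c + 1) - int m) :: 'k::field_char_0 mpoly)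
       = of_nat ((x + c) choose (m - 1))"
proof (cases "x + c + 1 < m")
  case True
  then show ?thesis by (simp add: hY_def binomial_eq_0)
next
  case False
  define r where "r = x + c + 1 - m"
  have "int x + int (c + 1) - int m = int r" using False by (simp add: r_def)
  moreover have "meval a (hY (int r) :: 'k mpoly) = (1 / fact r) * (\<Prod>j<r. (of_nat m + of_nat j :: 'k))"
    using assms(1)
    by (simp add: hY_def meval_hom.hom_mult meval_hom.hom_prod meval_hom.hom_add meval_hom.hom_of_nat)
  moreover have "(\<Prod>j<r. (of_nat m + of_nat j :: 'k)) = pochhammer (of_nat (m + r - 1) - of_nat r + 1) r"
    using assms(2) by (simp add: pochhammer_prod atLeast0LessThan of_nat_diff)
  moreover have "(1 / fact r) * pochhammer (of_nat (m + r - 1) - of_nat r + 1) r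
               = (of_nat ((m + r - 1) choose r) :: 'k)"
    by (simp add: gbinomial_pochhammer' binomial_gbinomial)
  moreover have "(m + r - 1) choose r = (x + c) choose (m - 1)"
  proof -
    have "m + r - 1 = x + c" "r \<le> x + c" "x + c - r = m - 1" using False assms(2) by (auto simp: r_def)
    then show ?thesis using binomial_symmetric by metis
  qed
  ultimately show ?thesis by simp
qed

lemma calE_pt_prod:
  assumes "length a = m"
  shows "foldr gmul (map (calE_pt m) a) gone S
       = (if S = {0..<m} then det (mat m m (\<lambda>(r,c). hY (int (a!r) + int (c + 1) - int m)))
          else (0 :: 'k::field_char_0 mpoly))"
proof -
  define xs where "xs = (map (calE_pt m) a :: 'k mpoly grass list)"
  have len: "length xs = m" using assms by (simp add: xs_def)
  have mat: "mat m m (\<lambda>(r,c). (xs!r) {c}) = mat m m (\<lambda>(r,c). hY (int (a!r) + int (c + 1) - int m))"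
    by (rule eq_matI) (use assms in \<open>auto simp: xs_def calE_pt_def gensum_single\<close>)
  have "\<forall>v\<in>set xs. deg1 v \<and> (\<forall>i. v {i} \<noteq> 0 \<longrightarrow> i < length xs)"
    using assms by (auto simp: xs_def deg1_def calE_pt_def gensum_nonsingle gensum_single split: if_splits)
  from gprod_deg1_top[OF this, of S]
  have "foldr gmul xs gone S = (if S = {0..<m} then det (mat m m (\<lambda>(r,c). (xs!r) {c})) else 0)"
    by (simp only: len)
  also note mat
  finally show ?thesis
    by (simp only: xs_def)
qed

lemma calE_pL_eval:
  assumes "length (fst L) = m" "a 0 = of_nat N" "a 1 = of_nat m"
  shows "meval a (calE_pL m L S :: 'k::field_char_0 mpoly)
       = (if S = {0..<m} then binom_det m (fst L) * of_nat N ^ length (snd L) else 0)"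
proof -
  have bosonic: "map (calE_p m) (snd L) = map gscal (replicate (length (snd L)) (mvar 0 :: 'k mpoly))"
    by (simp add: calE_p_def[abs_def] map_replicate_const)
  have "calE_pL m L S
      = gprod_list (map (calE_pt m) (fst L) @ map gscal (replicate (length (snd L)) (mvar 0 :: 'k mpoly))) S"
    by (simp only: calE_pL_def bosonic)
  also have "\<dots> = foldr gmul (map (calE_pt m) (fst L)) gone S * mvar 0 ^ length (snd L)"
    by (simp only: gprod_list_append_scalars prod_list_replicate)
  finally have pL: "calE_pL m L S
      = foldr gmul (map (calE_pt m) (fst L)) gone S * (mvar 0 :: 'k mpoly) ^ length (snd L)" .
  define H where "H = mat m m (\<lambda>(r,c). hY (int (fst L ! r) + int (c + 1) - int m) :: 'k mpoly)"
  define B where "B = mat m m (\<lambda>(r,c). of_nat ((fst L ! r + c) choose (m-1)) :: 'k)"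
  have "map_mat (meval a) H = B"
  proof (rule eq_matI)
    fix i j assume "i < dim_row B" "j < dim_col B"
    then show "map_mat (meval a) H $$ (i, j) = B $$ (i, j)"
      using hY_eval[where a=a and m=m and c=j and x="fst L ! i", OF assms(3)] by (simp add: H_def B_def)
  qed (simp_all add: H_def B_def)
  then have "meval a (det H) = binom_det m (fst L)"
    using meval_hom.hom_det[of a H] by (simp add: binom_det_def B_def)
  then show ?thesis
    using assms by (simp add: pL calE_pt_prod H_def meval_hom.hom_mult meval_hom.hom_power)
qed

lemma calE_eval:
  fixes c :: "nat list \<times> nat list \<Rightarrow> 'k::field_char_0"
  assumes "\<forall>L\<in>Supp. length (fst L) = m"
  shows "gmap (meval (\<lambda>v. if v = 0 then of_nat N else of_nat m)) (calE m Supp c) S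
       = (if S = {0..<m} then (\<Sum>L\<in>Supp. c L * (binom_det m (fst L) * of_nat N ^ length (snd L))) else 0)"
  using assms
  by (simp add: gmap_def calE_def meval_hom.hom_sum meval_hom.hom_mult calE_pL_eval
      if_distrib[of "\<lambda>x. _ * x"] cong: sum.cong)

theorem mainTheorem20:
  fixes m N :: nat
    and Supp :: "(nat list \<times> nat list) set"
    and c :: "nat list \<times> nat list \<Rightarrow> 'k::field_char_0"
  assumes "finite Supp"
    and "\<forall>L\<in>Supp. superpartition L \<and> ferm_deg L = m"
    and "m \<le> N"
  shows "gmap (meval (\<lambda>v. if v = 0 then of_nat N else of_nat m)) (calE m Supp c)
         = gmul (gprod_list (map ggen [0..<m]))
                (gscal (E_eval N m (superfun_restr Supp c N)))"
proof
  fix S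
  have len: "\<forall>L\<in>Supp. length (fst L) = m"
    using assms(2) by (simp add: ferm_deg_def)
  show "gmap (meval (\<lambda>v. if v = 0 then of_nat N else of_nat m)) (calE m Supp c) S
      = gmul (gprod_list (map ggen [0..<m])) (gscal (E_eval N m (superfun_restr Supp c N))) S"
    by (simp add: calE_eval[OF len] E_eval_superfun_restr[OF len assms(3)] gmul_top_gscal)
qed

end
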